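(* In the setting of the incomplete arithmetic HRE matrix $A_k$ (with $1\le k<n$), if $k=1$, or if $s_{\mathrm{MAX}}=s_{\mathrm{MIN}}$ and $\overline{\mathit{CI}}(C_k)<\frac{n-k}{k-1}$, then $A_k$ is invertible.
   Context: $C_k=[c_{ij}]_{i,j=1}^k$ is the upper-left $k\times k$ submatrix of an incomplete $n\times n$ pairwise comparison matrix (entries positive or unknown $?$, known entries reciprocal with unit diagonal). $s_i$ is the number of missing entries in row $i$ of $C_k$, $s_{\mathrm{MAX}}=\max_i s_i$, $s_{\mathrm{MIN}}=\min_i s_i$. $D_k=[d_{ij}]$ with $d_{ij}=c_{ij}$ if known, $0$ if $c_{ij}=?$. $A_k$ has diagonal entries $1$ and off-diagonal entries $-\frac{d_{ij}}{n-s_i-1}$. Harker's index: $\overline{\mathit{CI}}(C_k)=\frac{\rho(H)-k}{k-1}$ where $H$ has $h_{ii}=1+s_i$, $h_{ij}=0$ if $c_{ij}=?$, $h_{ij}=c_{ij}$ otherwise, and $\rho$ is the spectral radius. *)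

theory Defs
  imports "Jordan_Normal_Form.Spectral_Radius"
begin

text \<open>Incomplete pairwise comparison matrices of size n, indices 0..n-1.
  None encodes a missing entry.\<close>
definition incomplete_pcm :: "nat \<Rightarrow> (nat \<Rightarrow> nat \<Rightarrow> real option) \<Rightarrow> bool" where
  "incomplete_pcm n C \<longleftrightarrow>
     (\<forall>i<n. C i i = Some 1) \<and>
     (\<forall>i<n. \<forall>j<n. (C i j = None \<longleftrightarrow> C j i = None) \<and>
        (\<forall>x. C i j = Some x \<longrightarrow> x > 0 \<and> C j i = Some (1 / x)))"

definition miss :: "(nat \<Rightarrow> nat \<Rightarrow> real option) \<Rightarrow> nat \<Rightarrow> nat \<Rightarrow> nat" where
  "miss C k i = card {j. j < k \<and> C i j = None}"

definition s_max :: "(nat \<Rightarrow> nat \<Rightarrow> real option) \<Rightarrow> nat \<Rightarrow> nat" where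
  "s_max C k = Max (miss C k ` {..<k})"

definition s_min :: "(nat \<Rightarrow> nat \<Rightarrow> real option) \<Rightarrow> nat \<Rightarrow> nat" where
  "s_min C k = Min (miss C k ` {..<k})"

definition dval :: "(nat \<Rightarrow> nat \<Rightarrow> real option) \<Rightarrow> nat \<Rightarrow> nat \<Rightarrow> real" where
  "dval C i j = (case C i j of None \<Rightarrow> 0 | Some x \<Rightarrow> x)"

definition hre_A :: "nat \<Rightarrow> (nat \<Rightarrow> nat \<Rightarrow> real option) \<Rightarrow> nat \<Rightarrow> real mat" where
  "hre_A n C k = mat k k (\<lambda>(i, j). if i = j then 1
      else - dval C i j / (real n - real (miss C k i) - 1))"

definition harker_H :: "(nat \<Rightarrow> nat \<Rightarrow> real option) \<Rightarrow> nat \<Rightarrow> real mat" where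
  "harker_H C k = mat k k (\<lambda>(i, j). if i = j then 1 + real (miss C k i) else dval C i j)"

definition harker_CI :: "(nat \<Rightarrow> nat \<Rightarrow> real option) \<Rightarrow> nat \<Rightarrow> real" where
  "harker_CI C k = (spectral_radius (map_mat complex_of_real (harker_H C k)) - real k) / (real k - 1)"

end

theory Submission
  imports Defs
begin

(* When every row of C_k misses the same number s of entries, Harker's matrix is
   H = n I - (n - s - 1) A_k with n - s - 1 > 0. A null vector of A_k is then an
   eigenvector of H for the eigenvalue n, so rho(H) >= n; but the bound on Harker's
   index says exactly rho(H) < n. *)

lemma invertible_mat_if_det_nonzero:
  assumes A: "(A :: 'a :: field mat) \<in> carrier_mat m m" and det: "det A \<noteq> 0"
  shows "invertible_mat A"
proof -
  from det_non_zero_imp_unit[OF A det, of "()"]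
  obtain B where B: "B \<in> carrier_mat m m" "B * A = 1\<^sub>m m" "A * B = 1\<^sub>m m"
    unfolding Units_def ring_mat_def by auto
  show ?thesis unfolding invertible_mat_def inverts_mat_def square_mat.simps
    using A B by (intro conjI exI[of _ B]) auto
qed

lemma eigenvalue_smult_one_minus_smult_if_det_zero:
  assumes A: "(A :: 'a :: field mat) \<in> carrier_mat k k" and det: "det A = 0"
  shows "eigenvalue (c \<cdot>\<^sub>m 1\<^sub>m k - m \<cdot>\<^sub>m A) c"
proof -
  have "char_matrix (c \<cdot>\<^sub>m 1\<^sub>m k - m \<cdot>\<^sub>m A) c = (- m) \<cdot>\<^sub>m A"
    unfolding char_matrix_def using A by (intro eq_matI) (auto simp: algebra_simps)
  then show ?thesis
    using A det by (subst eigenvalue_det[of _ k]) auto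
qed

lemma norm_eigenvalue_le_spectral_radius:
  assumes A: "A \<in> carrier_mat k k" and ev: "eigenvalue A e"
  shows "norm e \<le> spectral_radius A"
  using spectral_radius_mem_max(2)[OF A eigenvalue_imp_nonzero_dim[OF A ev]] ev
  unfolding spectrum_def by auto

lemma miss_le:
  assumes "incomplete_pcm n C" and "i < k" and "k \<le> n"
  shows "miss C k i \<le> k - 1"
proof -
  have "C i i = Some 1" using assms unfolding incomplete_pcm_def by auto
  hence "{j. j < k \<and> C i j = None} \<subseteq> {..<k} - {i}" by auto
  hence "card {j. j < k \<and> C i j = None} \<le> card ({..<k} - {i})"
    by (intro card_mono) auto
  thus ?thesis using assms(2) unfolding miss_def by simp
qed

lemma miss_eq_s_max_if_s_max_eq_s_min:
  assumes "s_max C k = s_min C k" and "i < k"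
  shows "miss C k i = s_max C k"
proof -
  have "miss C k i \<le> s_max C k" unfolding s_max_def using assms(2) by simp
  moreover have "s_min C k \<le> miss C k i" unfolding s_min_def using assms(2) by simp
  ultimately show ?thesis using assms(1) by simp
qed

lemma hre_A_one: "hre_A n C 1 = 1\<^sub>m 1"
  unfolding hre_A_def by (rule eq_matI) auto

lemma harker_H_eq_hre_A:
  assumes "incomplete_pcm n C" and "k \<le> n"
    and miss: "\<And>i. i < k \<Longrightarrow> miss C k i = s" and m: "real n - real s - 1 \<noteq> 0"
  shows "harker_H C k = real n \<cdot>\<^sub>m 1\<^sub>m k - (real n - real s - 1) \<cdot>\<^sub>m hre_A n C k"
proof (rule eq_matI)
  fix i j assume "i < dim_row (real n \<cdot>\<^sub>m 1\<^sub>m k - (real n - real s - 1) \<cdot>\<^sub>m hre_A n C k)"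
    and "j < dim_col (real n \<cdot>\<^sub>m 1\<^sub>m k - (real n - real s - 1) \<cdot>\<^sub>m hre_A n C k)"
  then have i: "i < k" and j: "j < k" by (auto simp: hre_A_def)
  have "dval C i i = 1"
    using assms(1,2) i unfolding incomplete_pcm_def dval_def by auto
  then show "harker_H C k $$ (i, j)
      = (real n \<cdot>\<^sub>m 1\<^sub>m k - (real n - real s - 1) \<cdot>\<^sub>m hre_A n C k) $$ (i, j)"
    using i j m by (auto simp: harker_H_def hre_A_def miss)
qed (auto simp: harker_H_def hre_A_def)

lemma spectral_radius_less_if_harker_CI_less:
  assumes "2 \<le> k" and "harker_CI C k < (real n - real k) / (real k - 1)"
  shows "spectral_radius (map_mat complex_of_real (harker_H C k)) < real n"
  using assms unfolding harker_CI_def by (simp add: divide_less_cancel)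

lemma invertible_hre_A_if_spectral_radius_less:
  assumes pcm: "incomplete_pcm n C" and "k < n"
    and miss: "\<And>i. i < k \<Longrightarrow> miss C k i = s"
    and rho: "spectral_radius (map_mat complex_of_real (harker_H C k)) < real n"
  shows "invertible_mat (hre_A n C k)"
proof (cases "k = 0")
  case True
  then show ?thesis
    by (intro invertible_mat_if_det_nonzero[of _ 0]) (auto simp: hre_A_def det_def')
next
  case False
  let ?A = "hre_A n C k" and ?H = "harker_H C k"
  have A: "?A \<in> carrier_mat k k" and H: "?H \<in> carrier_mat k k"
    unfolding hre_A_def harker_H_def by auto
  have "s + 1 < n" using miss_le[OF pcm, of 0 k] miss[of 0] False \<open>k < n\<close> by simp
  then have m: "real n - real s - 1 \<noteq> 0" by linarith
  have "det ?A \<noteq> 0"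
  proof
    assume "det ?A = 0"
    then have "eigenvalue ?H (real n)"
      using harker_H_eq_hre_A[OF pcm _ miss m] \<open>k < n\<close>
        eigenvalue_smult_one_minus_smult_if_det_zero[OF A] by simp
    then have "eigenvalue (map_mat complex_of_real ?H) (complex_of_real (real n))"
      by (rule of_real_hom.eigenvalue_hom[OF H])
    then have "norm (complex_of_real (real n)) \<le> spectral_radius (map_mat complex_of_real ?H)"
      using H by (intro norm_eigenvalue_le_spectral_radius[of _ k]) auto
    with rho show False by simp
  qed
  with A show ?thesis by (rule invertible_mat_if_det_nonzero)
qed

theorem mainTheorem7:
  fixes n k :: nat and C :: "nat \<Rightarrow> nat \<Rightarrow> real option"
  assumes "incomplete_pcm n C"
    and "1 \<le> k" and "k < n"
    and "k = 1 \<or> (s_max C k = s_min C k \<and> harker_CI C k < (real n - real k) / (real k - 1))"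
  shows "invertible_mat (hre_A n C k)"
proof (cases "k = 1")
  case True
  show ?thesis
    unfolding True hre_A_one by (rule invertible_mat_if_det_nonzero[of _ 1]) auto
next
  case False
  with assms(2,4) have "2 \<le> k" and "s_max C k = s_min C k"
    and "harker_CI C k < (real n - real k) / (real k - 1)" by auto
  then show ?thesis
    using invertible_hre_A_if_spectral_radius_less[OF assms(1,3)]
      miss_eq_s_max_if_s_max_eq_s_min spectral_radius_less_if_harker_CI_less by blast
qed

end
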